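(* If $0\neq f\in F(\mathfrak B)$ has degree $k$, then all identities $w^{(j)}_{(\mu_1,\mu_2)}=0$ with $\mu_2\ge k$ (and $0\le j\le\mu_1-\mu_2$) are consequences of $f=0$, i.e. all such $w^{(j)}_{(\mu_1,\mu_2)}$ lie in the T-ideal generated by $f$.
   Context: $K$ is a field of characteristic $0$. $\mathfrak B$ is the variety of bicommutative algebras (identities $(x_1x_2)x_3=(x_1x_3)x_2$, $x_1(x_2x_3)=x_2(x_1x_3)$), with free algebra $F(\mathfrak B)$ on $x_1,x_2,\dots$; a T-ideal is a two-sided ideal closed under all endomorphisms. Model: with $K[Y,Z]$ the commutative polynomial ring in $y_1,y_2,\dots,z_1,z_2,\dots$, the algebra $G$ has basis $\{x_i\}\cup\{Y^\alpha Z^\beta:|\alpha|,|\beta|>0\}$ and multiplication $x_ix_j=y_iz_j$, $x_i\cdot(Y^\alpha Z^\beta)=y_iY^\alpha Z^\beta$, $(Y^\alpha Z^\beta)\cdot x_j=Y^\alpha Z^\beta z_j$, $(Y^\alpha Z^\beta)(Y^\gamma Z^\delta)=Y^{\alpha+\gamma}Z^{\beta+\delta}$; it is known that $x_i\mapsto x_i$ gives an isomorphism $F(\mathfrak B)\cong G$, so elements of $F(\mathfrak B)^2$ are written as polynomials in the $y_i,z_i$. For $\mu=(\mu_1,\mu_2)$ with $\mu_2>0$, $w^{(j)}_\mu=y_1^j(y_1z_2-y_2z_1)^{\mu_2}z_1^{\mu_1-\mu_2-j}$, $0\le j\le\mu_1-\mu_2$. *)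

theory Defs
  imports Main "HOL-Library.Poly_Mapping"
begin

text \<open>Concrete model G of the free bicommutative algebra F(B) over a field K.
  Generators are indexed by nat: the paper's x_1, x_2, ... are our indices 0, 1, ...
  Commuting variables y_i, z_i of K[Y,Z]: \<close>

datatype var = Yv nat | Zv nat

type_synonym mono = "var \<Rightarrow>\<^sub>0 nat"
type_synonym 'k pol = "mono \<Rightarrow>\<^sub>0 'k"

text \<open>An element of G: a linear part (coefficients of the x_i) and a polynomial part
  (a linear combination of Y^a Z^b with |a|,|b| > 0).\<close>
type_synonym 'k bel = "(nat \<Rightarrow>\<^sub>0 'k) \<times> 'k pol"

definition pvar :: "var \<Rightarrow> 'k::comm_ring_1 pol" where
  "pvar v = Poly_Mapping.single (Poly_Mapping.single v 1) 1"

definition admissible_mono :: "mono \<Rightarrow> bool" where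
  "admissible_mono m \<longleftrightarrow> (\<exists>i. Yv i \<in> Poly_Mapping.keys m) \<and> (\<exists>i. Zv i \<in> Poly_Mapping.keys m)"

definition FB :: "('k::field) bel set" where
  "FB = {(a, p). \<forall>m \<in> Poly_Mapping.keys p. admissible_mono m}"

definition bzero :: "('k::field) bel" where
  "bzero = (0, 0)"

definition badd :: "('k::field) bel \<Rightarrow> 'k bel \<Rightarrow> 'k bel" where
  "badd u v = (fst u + fst v, snd u + snd v)"

definition bsmul :: "'k::field \<Rightarrow> 'k bel \<Rightarrow> 'k bel" where
  "bsmul c u = (Poly_Mapping.map ((*) c) (fst u), Poly_Mapping.map ((*) c) (snd u))"

definition ylin :: "(nat \<Rightarrow>\<^sub>0 'k::field) \<Rightarrow> 'k pol" where
  "ylin a = (\<Sum>i\<in>Poly_Mapping.keys a. Poly_Mapping.single (Poly_Mapping.single (Yv i) 1) (Poly_Mapping.lookup a i))"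

definition zlin :: "(nat \<Rightarrow>\<^sub>0 'k::field) \<Rightarrow> 'k pol" where
  "zlin a = (\<Sum>i\<in>Poly_Mapping.keys a. Poly_Mapping.single (Poly_Mapping.single (Zv i) 1) (Poly_Mapping.lookup a i))"

text \<open>Multiplication of G, extended bilinearly:
  x_i x_j = y_i z_j, x_i P = y_i P, P x_j = P z_j, P Q = PQ.
  Hence (a + P)(b + Q) = (ylin a + P)(zlin b + Q).\<close>
definition bmul :: "('k::field) bel \<Rightarrow> 'k bel \<Rightarrow> 'k bel" where
  "bmul u v = (0, (ylin (fst u) + snd u) * (zlin (fst v) + snd v))"

definition gen :: "nat \<Rightarrow> ('k::field) bel" where
  "gen i = (Poly_Mapping.single i 1, 0)"

definition endo :: "(('k::field) bel \<Rightarrow> 'k bel) \<Rightarrow> bool" where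
  "endo \<phi> \<longleftrightarrow> (\<forall>u\<in>FB. \<phi> u \<in> FB)
     \<and> (\<forall>u\<in>FB. \<forall>v\<in>FB. \<phi> (badd u v) = badd (\<phi> u) (\<phi> v))
     \<and> (\<forall>c. \<forall>u\<in>FB. \<phi> (bsmul c u) = bsmul c (\<phi> u))
     \<and> (\<forall>u\<in>FB. \<forall>v\<in>FB. \<phi> (bmul u v) = bmul (\<phi> u) (\<phi> v))"

definition bideal :: "('k::field) bel set \<Rightarrow> bool" where
  "bideal I \<longleftrightarrow> I \<subseteq> FB \<and> bzero \<in> I
     \<and> (\<forall>u\<in>I. \<forall>v\<in>I. badd u v \<in> I)
     \<and> (\<forall>c. \<forall>u\<in>I. bsmul c u \<in> I)
     \<and> (\<forall>u\<in>I. \<forall>v\<in>FB. bmul u v \<in> I \<and> bmul v u \<in> I)"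

definition T_ideal :: "('k::field) bel set \<Rightarrow> bool" where
  "T_ideal I \<longleftrightarrow> bideal I \<and> (\<forall>\<phi>. endo \<phi> \<longrightarrow> \<phi> ` I \<subseteq> I)"

definition T_ideal_gen :: "('k::field) bel \<Rightarrow> 'k bel set" where
  "T_ideal_gen f = \<Inter>{I. T_ideal I \<and> f \<in> I}"

definition mdeg :: "mono \<Rightarrow> nat" where
  "mdeg m = (\<Sum>v\<in>Poly_Mapping.keys m. Poly_Mapping.lookup m v)"

definition bdeg :: "('k::field) bel \<Rightarrow> nat" where
  "bdeg u = Max ((if fst u = 0 then {} else {1}) \<union> mdeg ` Poly_Mapping.keys (snd u))"

text \<open>w^(j)_mu = y_1^j (y_1 z_2 - y_2 z_1)^{mu_2} z_1^{mu_1 - mu_2 - j} (paper indices 1,2 = our 0,1).\<close>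
definition w_elem :: "nat \<Rightarrow> nat \<Rightarrow> nat \<Rightarrow> ('k::field) bel" where
  "w_elem j mu1 mu2 = (0,
     pvar (Yv 0) ^ j * (pvar (Yv 0) * pvar (Zv 1) - pvar (Yv 1) * pvar (Zv 0)) ^ mu2
       * pvar (Zv 0) ^ (mu1 - mu2 - j))"

end

theory Submission
  imports Defs "HOL-Computational_Algebra.Polynomial"
begin

text \<open>
  Write \<Delta> = y_1 z_2 - y_2 z_1 = x_1 x_2 - x_2 x_1; every w^(j)_\<mu> is a multiple of \<Delta>^\<mu>_2, so it
  suffices to find \<Delta>^d with d \<le> k in the T-ideal of f. If the linear part of f is nonzero, a
  linear endomorphism maps it to each generator, and \<Delta> itself is in the T-ideal. Otherwise,
  rescaling x_i \<mapsto> t x_i and comparing coefficients of t (K is infinite) puts every homogeneous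
  component of f into the T-ideal; let P \<noteq> 0 be one of degree d \<le> k. The same Vandermonde
  argument, applied to the coefficients of the endomorphisms x_i \<mapsto> a_i x_1 + b_i x_2, shows that the
  polynomial part of the T-ideal is closed under y_i \<mapsto> a_i y_1 + b_i y_2, z_i \<mapsto> a_i z_1 + b_i z_2
  even for polynomial a_i, b_i. Taking a_i = c_i z_2 - c'_i y_2 and b_i = c'_i y_1 - c_i z_1 sends
  y_i \<mapsto> c_i \<Delta> and z_i \<mapsto> c'_i \<Delta>, hence P \<mapsto> P(c, c') \<Delta>^d, and P(c, c') \<noteq> 0 for suitable
  scalars c, c'.
\<close>

section \<open>Substitution in K[Y,Z]\<close>

definition pconst :: "'k::comm_ring_1 \<Rightarrow> 'k pol" where
  "pconst c = Poly_Mapping.single 0 c"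

lemma pconst_0 [simp]: "pconst 0 = 0"
  by (simp add: pconst_def)

lemma pconst_1 [simp]: "pconst 1 = 1"
  by (simp add: pconst_def)

lemma pconst_add: "pconst (a + b) = pconst a + pconst b"
  by (simp add: pconst_def single_add)

lemma pconst_mult: "pconst (a * b) = pconst a * pconst b"
  by (simp add: pconst_def mult_single)

lemma pconst_uminus: "pconst (- a) = - pconst a"
  by (simp add: pconst_def single_uminus)

lemma pconst_diff: "pconst (a - b) = pconst a - pconst b"
  by (simp add: pconst_def single_diff)

lemma pconst_power: "pconst (a ^ n) = pconst a ^ n"
  by (induct n) (simp_all add: pconst_mult)

lemma pconst_sum: "pconst (sum f A) = (\<Sum>x\<in>A. pconst (f x))"
  by (induct A rule: infinite_finite_induct) (simp_all add: pconst_add)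

lemma pconst_prod: "pconst (prod f A) = (\<Prod>x\<in>A. pconst (f x))"
  by (induct A rule: infinite_finite_induct) (simp_all add: pconst_mult)

lemma map_mult_eq_pconst_mult: "Poly_Mapping.map ((*) c) P = pconst c * P"
  by (simp add: pconst_def mult_map_scale_conv_mult)

lemma pconst_mult_single: "pconst c * Poly_Mapping.single m 1 = Poly_Mapping.single m c"
  by (simp add: pconst_def mult_single)

lemma single_single_eq_pconst_mult_pvar:
  "Poly_Mapping.single (Poly_Mapping.single v 1) c = pconst c * pvar v"
  by (simp add: pvar_def pconst_mult_single)

lemma pvar_power: "pvar v ^ e = Poly_Mapping.single (Poly_Mapping.single v e) (1::'k::comm_ring_1)"
  by (induct e) (simp_all add: pvar_def mult_single single_add[symmetric])

lemma poly_mapping_eq_sum_single: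
  "p = (\<Sum>k\<in>Poly_Mapping.keys p. Poly_Mapping.single k (Poly_Mapping.lookup p k))"
  by (rule poly_mapping_eqI) (auto simp: lookup_sum lookup_single when_def in_keys_iff)

lemma sum_keys_superset:
  assumes "finite A" and "Poly_Mapping.keys p \<subseteq> A" and "\<And>k. f k 0 = 0"
  shows "(\<Sum>k\<in>Poly_Mapping.keys p. f k (Poly_Mapping.lookup p k)) = (\<Sum>k\<in>A. f k (Poly_Mapping.lookup p k))"
  using assms by (intro sum.mono_neutral_left) (auto simp: in_keys_iff)

definition monom_subst :: "(var \<Rightarrow> 'k::comm_ring_1 pol) \<Rightarrow> mono \<Rightarrow> 'k pol" where
  "monom_subst \<rho> m = (\<Prod>v\<in>Poly_Mapping.keys m. \<rho> v ^ Poly_Mapping.lookup m v)"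

definition psubst :: "(var \<Rightarrow> 'k::comm_ring_1 pol) \<Rightarrow> 'k pol \<Rightarrow> 'k pol" where
  "psubst \<rho> P = (\<Sum>m\<in>Poly_Mapping.keys P. pconst (Poly_Mapping.lookup P m) * monom_subst \<rho> m)"

definition pvars :: "'k::zero pol \<Rightarrow> var set" where
  "pvars P = (\<Union>m\<in>Poly_Mapping.keys P. Poly_Mapping.keys m)"

definition homogeneous :: "nat \<Rightarrow> 'k::zero pol \<Rightarrow> bool" where
  "homogeneous d P \<longleftrightarrow> (\<forall>m\<in>Poly_Mapping.keys P. mdeg m = d)"

lemma finite_pvars: "finite (pvars P)"
  by (simp add: pvars_def)

lemma monom_subst_add: "monom_subst \<rho> (m + n) = monom_subst \<rho> m * monom_subst \<rho> n"
proof -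
  let ?A = "Poly_Mapping.keys m \<union> Poly_Mapping.keys n"
  have superset: "monom_subst \<rho> p = (\<Prod>v\<in>?A. \<rho> v ^ Poly_Mapping.lookup p v)"
    if "Poly_Mapping.keys p \<subseteq> ?A" for p
    unfolding monom_subst_def using that by (intro prod.mono_neutral_left) (auto simp: in_keys_iff)
  show ?thesis
    using keys_add[of m n]
    by (simp add: superset lookup_add power_add prod.distrib)
qed

lemma monom_subst_0 [simp]: "monom_subst \<rho> 0 = 1"
  by (simp add: monom_subst_def)

lemma monom_subst_single: "monom_subst \<rho> (Poly_Mapping.single v e) = \<rho> v ^ e"
  by (cases "e = 0") (simp_all add: monom_subst_def)

lemma monom_subst_pvar: "monom_subst pvar m = Poly_Mapping.single m (1::'k::comm_ring_1)"
proof -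
  have "monom_subst pvar m =
      (\<Prod>v\<in>Poly_Mapping.keys m. Poly_Mapping.single (Poly_Mapping.single v (Poly_Mapping.lookup m v)) (1::'k))"
    by (simp add: monom_subst_def pvar_power)
  also have "\<dots> = Poly_Mapping.single (\<Sum>v\<in>Poly_Mapping.keys m. Poly_Mapping.single v (Poly_Mapping.lookup m v)) 1"
    by (induct rule: infinite_finite_induct) (simp_all add: mult_single)
  finally show ?thesis
    by (simp only: poly_mapping_eq_sum_single[symmetric])
qed

lemma monom_subst_scale: "monom_subst (\<lambda>v. X * \<rho> v) m = X ^ mdeg m * monom_subst \<rho> m"
  by (simp add: monom_subst_def mdeg_def power_mult_distrib prod.distrib power_sum)

lemma psubst_0 [simp]: "psubst \<rho> 0 = 0"
  by (simp add: psubst_def)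

lemma psubst_add: "psubst \<rho> (P + Q) = psubst \<rho> P + psubst \<rho> Q"
  unfolding psubst_def by (rule setsum_keys_plus_distrib) (simp_all add: pconst_add distrib_right)

lemma psubst_single: "psubst \<rho> (Poly_Mapping.single m c) = pconst c * monom_subst \<rho> m"
  by (cases "c = 0") (simp_all add: psubst_def)

lemma psubst_sum: "psubst \<rho> (sum f A) = (\<Sum>x\<in>A. psubst \<rho> (f x))"
  by (induct A rule: infinite_finite_induct) (simp_all add: psubst_add)

lemma psubst_mult: "psubst \<rho> (P * Q) = psubst \<rho> P * psubst \<rho> Q"
proof -
  have "P * Q = (\<Sum>m\<in>Poly_Mapping.keys P. Poly_Mapping.single m (Poly_Mapping.lookup P m)) *
      (\<Sum>n\<in>Poly_Mapping.keys Q. Poly_Mapping.single n (Poly_Mapping.lookup Q n))"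
    by (simp only: poly_mapping_eq_sum_single[symmetric])
  also have "\<dots> = (\<Sum>m\<in>Poly_Mapping.keys P. \<Sum>n\<in>Poly_Mapping.keys Q.
      Poly_Mapping.single (m + n) (Poly_Mapping.lookup P m * Poly_Mapping.lookup Q n))"
    by (simp add: sum_product mult_single)
  finally have "psubst \<rho> (P * Q) = (\<Sum>m\<in>Poly_Mapping.keys P. \<Sum>n\<in>Poly_Mapping.keys Q.
      (pconst (Poly_Mapping.lookup P m) * monom_subst \<rho> m) * (pconst (Poly_Mapping.lookup Q n) * monom_subst \<rho> n))"
    by (simp add: psubst_sum psubst_single monom_subst_add pconst_mult ac_simps)
  also have "\<dots> = psubst \<rho> P * psubst \<rho> Q"
    by (simp add: psubst_def sum_product)
  finally show ?thesis .
qed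

lemma psubst_pconst [simp]: "psubst \<rho> (pconst c) = pconst c"
  by (simp add: pconst_def psubst_single)

lemma psubst_1 [simp]: "psubst \<rho> 1 = 1"
  using psubst_pconst[of \<rho> 1] by simp

lemma psubst_pvar [simp]: "psubst \<rho> (pvar v) = \<rho> v"
  by (simp add: pvar_def psubst_single monom_subst_single)

lemma psubst_power: "psubst \<rho> (P ^ n) = psubst \<rho> P ^ n"
  by (induct n) (simp_all add: psubst_mult)

lemma psubst_prod: "psubst \<rho> (prod f A) = (\<Prod>x\<in>A. psubst \<rho> (f x))"
  by (induct A rule: infinite_finite_induct) (simp_all add: psubst_mult)

lemma psubst_pvar_id [simp]: "psubst pvar P = P"
  unfolding psubst_def monom_subst_pvar pconst_mult_single
  by (rule poly_mapping_eq_sum_single[symmetric])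

lemma psubst_psubst: "psubst \<sigma> (psubst \<rho> P) = psubst (\<lambda>v. psubst \<sigma> (\<rho> v)) P"
  by (simp add: psubst_def[of \<rho>] psubst_sum psubst_mult monom_subst_def psubst_prod psubst_power)
    (simp add: psubst_def monom_subst_def)

lemma psubst_cong: "(\<And>v. v \<in> pvars P \<Longrightarrow> \<rho> v = \<rho>' v) \<Longrightarrow> psubst \<rho> P = psubst \<rho>' P"
  unfolding psubst_def monom_subst_def pvars_def
  by (intro sum.cong refl arg_cong2[where f = "(*)"] prod.cong) force

lemma psubst_homogeneous:
  "homogeneous d P \<Longrightarrow> psubst (\<lambda>v. X * \<rho> v) P = X ^ d * psubst \<rho> P"
  unfolding psubst_def monom_subst_scale homogeneous_def by (simp add: sum_distrib_left ac_simps)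

lemma pol_in_subalgebra:
  assumes "\<And>c. pconst c \<in> M" and "\<And>v. pvar v \<in> M"
    and add: "\<And>p q. p \<in> M \<Longrightarrow> q \<in> M \<Longrightarrow> p + q \<in> M"
    and mult: "\<And>p q. p \<in> M \<Longrightarrow> q \<in> M \<Longrightarrow> p * q \<in> M"
  shows "(Q :: 'k::comm_ring_1 pol) \<in> M"
proof -
  have zero: "0 \<in> M" and one: "1 \<in> M"
    using assms(1)[of 0] assms(1)[of 1] by simp_all
  have "(\<Sum>x\<in>A. f x) \<in> M" if "\<And>x. x \<in> A \<Longrightarrow> f x \<in> M" for A and f :: "mono \<Rightarrow> 'k pol"
    using that by (induct A rule: infinite_finite_induct) (simp_all add: zero add)
  moreover have "(\<Prod>x\<in>A. f x) \<in> M" if "\<And>x. x \<in> A \<Longrightarrow> f x \<in> M" for A and f :: "var \<Rightarrow> 'k pol"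
    using that by (induct A rule: infinite_finite_induct) (simp_all add: one mult)
  moreover have "p ^ n \<in> M" if "p \<in> M" for p n
    using that by (induct n) (simp_all add: one mult)
  ultimately have "psubst pvar Q \<in> M"
    unfolding psubst_def monom_subst_def by (simp add: assms)
  then show ?thesis
    by simp
qed

definition peval :: "(var \<Rightarrow> 'k::comm_ring_1) \<Rightarrow> 'k pol \<Rightarrow> 'k" where
  "peval c P = (\<Sum>m\<in>Poly_Mapping.keys P.
     Poly_Mapping.lookup P m * (\<Prod>v\<in>Poly_Mapping.keys m. c v ^ Poly_Mapping.lookup m v))"

lemma psubst_pconst_eq_peval: "psubst (\<lambda>v. pconst (c v)) P = pconst (peval c P)"
  by (simp add: psubst_def monom_subst_def peval_def pconst_sum pconst_mult pconst_prod pconst_power)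

section \<open>Specialising variables over an infinite field\<close>

definition var_coeff :: "var \<Rightarrow> nat \<Rightarrow> 'k::comm_ring_1 pol \<Rightarrow> 'k pol" where
  "var_coeff v r Q = (\<Sum>m\<in>Poly_Mapping.keys Q. if Poly_Mapping.lookup m v = r
     then Poly_Mapping.single (Poly_Mapping.update v 0 m) (Poly_Mapping.lookup Q m) else 0)"

lemma var_notin_pvars_var_coeff: "v \<notin> pvars (var_coeff v r Q)"
proof
  assume "v \<in> pvars (var_coeff v r Q)"
  then obtain m where m: "m \<in> Poly_Mapping.keys (var_coeff v r Q)" and "v \<in> Poly_Mapping.keys m"
    by (auto simp: pvars_def)
  have "Poly_Mapping.keys (var_coeff v r Q) \<subseteq> (\<Union>m'\<in>Poly_Mapping.keys Q. {Poly_Mapping.update v 0 m'})"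
    unfolding var_coeff_def by (rule order_trans[OF keys_sum UN_mono]) auto
  with m have "Poly_Mapping.lookup m v = 0"
    by (auto simp: lookup_update)
  with \<open>v \<in> Poly_Mapping.keys m\<close> show False
    by (simp add: in_keys_iff)
qed

lemma psubst_var_coeff_upd: "psubst (\<rho>(v := x)) (var_coeff v r Q) = psubst \<rho> (var_coeff v r Q)"
  using var_notin_pvars_var_coeff by (metis fun_upd_other psubst_cong)

lemma sum_pvar_power_var_coeff:
  assumes "\<And>m. m \<in> Poly_Mapping.keys Q \<Longrightarrow> Poly_Mapping.lookup m v < n"
  shows "(\<Sum>r<n. pvar v ^ r * var_coeff v r Q) = (Q :: 'k::comm_ring_1 pol)"
proof -
  have split: "Poly_Mapping.update v 0 m + Poly_Mapping.single v (Poly_Mapping.lookup m v) = (m::mono)" for m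
    by (rule poly_mapping_eqI) (simp add: lookup_add lookup_update lookup_single when_def)
  have "(\<Sum>r<n. pvar v ^ r * var_coeff v r Q) = (\<Sum>m\<in>Poly_Mapping.keys Q. \<Sum>r<n.
      if Poly_Mapping.lookup m v = r
      then pvar v ^ r * Poly_Mapping.single (Poly_Mapping.update v 0 m) (Poly_Mapping.lookup Q m) else 0)"
    unfolding var_coeff_def sum_distrib_left by (subst sum.swap) (intro sum.cong refl; simp)
  also have "\<dots> = (\<Sum>m\<in>Poly_Mapping.keys Q. Poly_Mapping.single m (Poly_Mapping.lookup Q m))"
    using assms by (intro sum.cong refl) (simp add: pvar_power mult_single add.commute split)
  finally show ?thesis
    by (simp only: poly_mapping_eq_sum_single[symmetric])
qed

lemma psubst_eq_sum_var_coeff: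
  assumes "\<And>m. m \<in> Poly_Mapping.keys Q \<Longrightarrow> Poly_Mapping.lookup m v < n"
  shows "psubst \<rho> Q = (\<Sum>r<n. \<rho> v ^ r * psubst \<rho> (var_coeff v r Q))"
proof -
  have "psubst \<rho> Q = psubst \<rho> (\<Sum>r<n. pvar v ^ r * var_coeff v r Q)"
    by (simp only: sum_pvar_power_var_coeff[OF assms])
  then show ?thesis
    by (simp add: psubst_sum psubst_mult psubst_power)
qed

lemma poly_coeff_in_subspace:
  fixes J :: "'k::field pol set" and p :: "'k pol poly"
  assumes K: "infinite (UNIV :: 'k set)"
    and zero: "0 \<in> J" and add: "\<And>x y. x \<in> J \<Longrightarrow> y \<in> J \<Longrightarrow> x + y \<in> J"
    and scale: "\<And>x c. x \<in> J \<Longrightarrow> pconst c * x \<in> J"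
    and "finite E" and "\<And>t. t \<notin> E \<Longrightarrow> poly p (pconst t) \<in> J"
  shows "coeff p r \<in> J"
  using assms(5,6)
proof (induction "degree p" arbitrary: p E r rule: less_induct)
  case less
  have diff: "x - y \<in> J" if "x \<in> J" "y \<in> J" for x y
    using add[OF that(1) scale[OF that(2), of "-1"]] by (simp add: pconst_uminus)
  obtain t0 where t0: "t0 \<notin> E"
    using ex_new_if_finite[OF K less.prems(1)] by blast
  define q where "q = synthetic_div p (pconst t0)"
  have division: "p + smult (pconst t0) q = pCons (poly p (pconst t0)) q"
    unfolding q_def by (rule synthetic_div_correct)
  have pt0: "poly p (pconst t0) \<in> J"
    using less.prems(2) t0 by blast
  have "poly q (pconst t) \<in> J" if t: "t \<notin> insert t0 E" for t
  proof -
    have "poly p (pconst t) + pconst t0 * poly q (pconst t) = poly p (pconst t0) + pconst t * poly q (pconst t)"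
      using arg_cong[OF division, of "\<lambda>p. poly p (pconst t)"] by simp
    then have "poly p (pconst t) - poly p (pconst t0) = pconst (t - t0) * poly q (pconst t)"
      by (simp add: pconst_diff algebra_simps eq_diff_eq)
    then have "pconst (1 / (t - t0)) * (poly p (pconst t) - poly p (pconst t0)) = poly q (pconst t)"
      using t by (simp add: mult.assoc[symmetric] pconst_mult[symmetric])
    moreover have "poly p (pconst t) - poly p (pconst t0) \<in> J"
      using diff less.prems(2) t pt0 by simp
    ultimately show ?thesis
      using scale by metis
  qed
  note poly_q = this
  have coeff_q: "coeff q s \<in> J" for s
  proof (cases "degree p = 0")
    case True
    then have "q = 0"
      by (simp add: q_def synthetic_div_eq_0_iff)
    then show ?thesis
      using zero by simp
  next
    case False
    then have "degree q < degree p"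
      by (simp add: q_def degree_synthetic_div)
    then show ?thesis
      using less.hyps less.prems(1) poly_q by blast
  qed
  show ?case
  proof (cases r)
    case 0
    then have "coeff p r = poly p (pconst t0) - pconst t0 * coeff q 0"
      using arg_cong[OF division, of "\<lambda>p. coeff p 0"] by (simp add: algebra_simps)
    then show ?thesis
      using diff pt0 scale coeff_q by simp
  next
    case (Suc s)
    then have "coeff p r = coeff q s - pconst t0 * coeff q (Suc s)"
      using arg_cong[OF division, of "\<lambda>p. coeff p (Suc s)"] by (simp add: algebra_simps)
    then show ?thesis
      using diff scale coeff_q by simp
  qed
qed

lemma power_sum_coeff_in_subspace:
  fixes J :: "'k::field pol set"
  assumes K: "infinite (UNIV :: 'k set)"
    and zero: "0 \<in> J" and add: "\<And>x y. x \<in> J \<Longrightarrow> y \<in> J \<Longrightarrow> x + y \<in> J"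
    and scale: "\<And>x c. x \<in> J \<Longrightarrow> pconst c * x \<in> J"
    and sums: "\<And>t. (\<Sum>r<n. pconst t ^ r * X r) \<in> J" and "r < n"
  shows "X r \<in> J"
proof -
  define p where "p = (\<Sum>r<n. monom (X r) r)"
  have "coeff p r \<in> J"
    by (rule poly_coeff_in_subspace[OF K zero add scale, of "{}"])
      (use sums in \<open>simp_all add: p_def poly_sum poly_monom mult.commute\<close>)
  with \<open>r < n\<close> show ?thesis
    by (simp add: p_def coeff_sum)
qed

definition pideal :: "'k::comm_ring_1 pol set \<Rightarrow> bool" where
  "pideal J \<longleftrightarrow> 0 \<in> J \<and> (\<forall>x\<in>J. \<forall>y\<in>J. x + y \<in> J) \<and> (\<forall>q. \<forall>x\<in>J. q * x \<in> J)"

lemma pideal_0: "pideal J \<Longrightarrow> 0 \<in> J"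
  by (simp add: pideal_def)

lemma pideal_add: "pideal J \<Longrightarrow> x \<in> J \<Longrightarrow> y \<in> J \<Longrightarrow> x + y \<in> J"
  by (simp add: pideal_def)

lemma pideal_mult: "pideal J \<Longrightarrow> x \<in> J \<Longrightarrow> q * x \<in> J"
  by (simp add: pideal_def)

lemma pideal_sum: "pideal J \<Longrightarrow> (\<And>x. x \<in> A \<Longrightarrow> f x \<in> J) \<Longrightarrow> (\<Sum>x\<in>A. f x) \<in> J"
  by (induct A rule: infinite_finite_induct) (simp_all add: pideal_0 pideal_add)

text \<open>Induction on F, one variable at a time: the values at t \<in> K of the polynomial in t obtained
  by specialising a further variable v to t determine its coefficients (Vandermonde).\<close>

lemma psubst_in_pideal:
  fixes J :: "'k::field pol set"
  assumes K: "infinite (UNIV :: 'k set)" and J: "pideal J" and "finite F"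
    and "\<And>c. psubst (\<lambda>v. if v \<in> F then pconst (c v) else pvar v) Q \<in> J"
  shows "psubst (\<lambda>v. if v \<in> F then \<rho> v else pvar v) Q \<in> J"
  using assms(3,4)
proof (induction F arbitrary: Q \<rho> rule: finite_induct)
  case empty
  then show ?case by simp
next
  case (insert v F)
  let ?on = "\<lambda>F \<rho> w. if w \<in> F then \<rho> w else pvar w"
  have upd: "?on (insert v F) \<rho> = (?on F \<sigma>)(v := \<rho> v)" if "\<forall>w\<in>F. \<sigma> w = \<rho> w"
    for \<rho> \<sigma> :: "var \<Rightarrow> 'k pol"
    using insert.hyps(2) that by (auto simp: fun_eq_iff)
  obtain n where n: "\<And>m. m \<in> Poly_Mapping.keys Q \<Longrightarrow> Poly_Mapping.lookup m v < n"
    using finite_nat_set_iff_bounded[of "(\<lambda>m. Poly_Mapping.lookup m v) ` Poly_Mapping.keys Q"] by auto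
  have decomp: "psubst ((?on F \<sigma>)(v := x)) Q = (\<Sum>r<n. x ^ r * psubst (?on F \<sigma>) (var_coeff v r Q))"
    for \<sigma> x
    by (simp add: psubst_eq_sum_var_coeff[OF n] psubst_var_coeff_upd)
  have coeffs_in: "psubst (?on F \<rho>) (var_coeff v r Q) \<in> J" if "r < n" for r \<rho>
  proof (rule insert.IH)
    fix c
    show "psubst (?on F (\<lambda>w. pconst (c w))) (var_coeff v r Q) \<in> J"
    proof (rule power_sum_coeff_in_subspace[OF K, where n = n
        and X = "\<lambda>r. psubst (\<lambda>w. if w \<in> F then pconst (c w) else pvar w) (var_coeff v r Q)"])
      fix t
      have "psubst (?on (insert v F) (\<lambda>w. pconst ((c(v := t)) w))) Q \<in> J"
        by (rule insert.prems)
      also have "?on (insert v F) (\<lambda>w. pconst ((c(v := t)) w)) = (?on F (\<lambda>w. pconst (c w)))(v := pconst t)"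
        using upd[of "\<lambda>w. pconst (c w)"] insert.hyps(2) by simp
      finally show "(\<Sum>r<n. pconst t ^ r * psubst (?on F (\<lambda>w. pconst (c w))) (var_coeff v r Q)) \<in> J"
        by (simp only: decomp)
    qed (use J that in \<open>simp_all add: pideal_0 pideal_add pideal_mult\<close>)
  qed
  have "psubst (?on (insert v F) \<rho>) Q = psubst ((?on F \<rho>)(v := \<rho> v)) Q"
    using upd[of \<rho> \<rho>] by simp
  also have "\<dots> = (\<Sum>r<n. \<rho> v ^ r * psubst (?on F \<rho>) (var_coeff v r Q))"
    by (rule decomp)
  also have "\<dots> \<in> J"
    by (intro pideal_sum[OF J] pideal_mult[OF J] coeffs_in) simp
  finally show ?case .
qed

lemma ex_peval_nonzero:
  fixes P :: "'k::field pol"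
  assumes K: "infinite (UNIV :: 'k set)" and "P \<noteq> 0"
  shows "\<exists>c. peval c P \<noteq> 0"
proof (rule ccontr)
  assume "\<nexists>c. peval c P \<noteq> 0"
  then have const_substs: "psubst (\<lambda>v. if v \<in> pvars P then pconst (c v) else pvar v) P \<in> {0}" for c
  proof -
    have "psubst (\<lambda>v. if v \<in> pvars P then pconst (c v) else pvar v) P = psubst (\<lambda>v. pconst (c v)) P"
      by (rule psubst_cong) simp
    with \<open>\<nexists>c. peval c P \<noteq> 0\<close> show ?thesis
      by (simp add: psubst_pconst_eq_peval)
  qed
  have "pideal {0 :: 'k pol}"
    by (simp add: pideal_def)
  then have "psubst (\<lambda>v. if v \<in> pvars P then pvar v else pvar v) P \<in> {0}"
    by (rule psubst_in_pideal[OF K _ finite_pvars]) (rule const_substs)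
  with \<open>P \<noteq> 0\<close> show False
    by simp
qed

section \<open>Linear endomorphisms of F(B)\<close>

definition lin :: "(nat \<Rightarrow> var) \<Rightarrow> (nat \<Rightarrow>\<^sub>0 'k::comm_ring_1) \<Rightarrow> 'k pol" where
  "lin V a = (\<Sum>i\<in>Poly_Mapping.keys a. pconst (Poly_Mapping.lookup a i) * pvar (V i))"

lemma ylin_eq_lin: "ylin = lin Yv"
  by (rule ext) (simp only: ylin_def lin_def single_single_eq_pconst_mult_pvar)

lemma zlin_eq_lin: "zlin = lin Zv"
  by (rule ext) (simp only: zlin_def lin_def single_single_eq_pconst_mult_pvar)

lemma lin_add: "lin V (a + b) = lin V a + lin V b"
  unfolding lin_def by (rule setsum_keys_plus_distrib) (simp_all add: pconst_add distrib_right)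

lemma lin_0 [simp]: "lin V 0 = 0"
  by (simp add: lin_def)

lemma lin_sum: "lin V (sum f A) = (\<Sum>x\<in>A. lin V (f x))"
  by (induct A rule: infinite_finite_induct) (simp_all add: lin_add)

lemma lin_single: "lin V (Poly_Mapping.single i c) = pconst c * pvar (V i)"
  by (cases "c = 0") (simp_all add: lin_def)

lemma lookup_single_0_mult:
  "Poly_Mapping.lookup (Poly_Mapping.single 0 c * a) i = c * Poly_Mapping.lookup a i"
  by (simp add: mult_map_scale_conv_mult[symmetric] map.rep_eq when_def)

lemma keys_single_0_mult: "Poly_Mapping.keys (Poly_Mapping.single 0 c * a) \<subseteq> Poly_Mapping.keys a"
  by (auto simp: in_keys_iff lookup_single_0_mult)

lemma lin_single_0_mult: "lin V (Poly_Mapping.single 0 c * a) = pconst c * lin V a"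
  unfolding lin_def
  by (subst sum_keys_superset[OF finite_keys keys_single_0_mult])
    (simp_all add: lookup_single_0_mult pconst_mult sum_distrib_left mult.assoc)

definition lmap :: "(nat \<Rightarrow> nat \<Rightarrow>\<^sub>0 'k) \<Rightarrow> (nat \<Rightarrow>\<^sub>0 'k::comm_ring_1) \<Rightarrow> nat \<Rightarrow>\<^sub>0 'k" where
  "lmap L a = (\<Sum>i\<in>Poly_Mapping.keys a. Poly_Mapping.single 0 (Poly_Mapping.lookup a i) * L i)"

lemma lmap_add: "lmap L (a + b) = lmap L a + lmap L b"
  unfolding lmap_def by (rule setsum_keys_plus_distrib) (simp_all add: single_add distrib_right)

lemma lmap_0 [simp]: "lmap L 0 = 0"
  by (simp add: lmap_def)

lemma lmap_single_0_mult: "lmap L (Poly_Mapping.single 0 c * a) = Poly_Mapping.single 0 c * lmap L a"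
  unfolding lmap_def
  by (subst sum_keys_superset[OF finite_keys keys_single_0_mult])
    (simp_all add: lookup_single_0_mult mult_single sum_distrib_left mult.assoc[symmetric])

definition lin_subst :: "(nat \<Rightarrow> nat \<Rightarrow>\<^sub>0 'k) \<Rightarrow> var \<Rightarrow> 'k::comm_ring_1 pol" where
  "lin_subst L v = (case v of Yv i \<Rightarrow> lin Yv (L i) | Zv i \<Rightarrow> lin Zv (L i))"

lemma psubst_lin_subst_lin:
  assumes "V = Yv \<or> V = Zv"
  shows "psubst (lin_subst L) (lin V a) = lin V (lmap L a)"
proof -
  have "psubst (lin_subst L) (lin V a) = (\<Sum>i\<in>Poly_Mapping.keys a. pconst (Poly_Mapping.lookup a i) * lin V (L i))"
    using assms by (auto simp: lin_def psubst_sum psubst_mult lin_subst_def)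
  also have "\<dots> = lin V (lmap L a)"
    by (simp add: lmap_def lin_sum lin_single_0_mult)
  finally show ?thesis .
qed

text \<open>The endomorphism of F(B) sending x_i to the linear form L i.\<close>

definition lin_endo :: "(nat \<Rightarrow> nat \<Rightarrow>\<^sub>0 'k) \<Rightarrow> 'k bel \<Rightarrow> 'k::field bel" where
  "lin_endo L u = (lmap L (fst u), psubst (lin_subst L) (snd u))"

definition monos_meet :: "var set \<Rightarrow> 'k::zero pol \<Rightarrow> bool" where
  "monos_meet A p \<longleftrightarrow> (\<forall>m\<in>Poly_Mapping.keys p. Poly_Mapping.keys m \<inter> A \<noteq> {})"

lemma monos_meet_mult_left:
  fixes p q :: "'k::comm_ring_1 pol"
  assumes "monos_meet A p"
  shows "monos_meet A (p * q)"
  unfolding monos_meet_def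
proof
  fix k assume "k \<in> Poly_Mapping.keys (p * q)"
  then obtain m n where k: "k = m + n" and m: "m \<in> Poly_Mapping.keys p"
    using keys_mult by blast
  have "Poly_Mapping.keys m \<subseteq> Poly_Mapping.keys k"
    unfolding k by (auto simp: in_keys_iff lookup_add)
  moreover have "Poly_Mapping.keys m \<inter> A \<noteq> {}"
    using assms m by (simp add: monos_meet_def)
  ultimately show "Poly_Mapping.keys k \<inter> A \<noteq> {}"
    by blast
qed

lemma monos_meet_mult_right: "monos_meet A q \<Longrightarrow> monos_meet A (p * (q :: 'k::comm_ring_1 pol))"
  using monos_meet_mult_left[of A q p] by (simp only: mult.commute)

lemma monos_meet_add: "monos_meet A p \<Longrightarrow> monos_meet A q \<Longrightarrow> monos_meet A (p + q)"
  unfolding monos_meet_def using keys_add[of p q] by blast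

lemma monos_meet_sum: "(\<And>x. x \<in> B \<Longrightarrow> monos_meet A (f x)) \<Longrightarrow> monos_meet A (sum f B)"
proof (induct B rule: infinite_finite_induct)
  case (insert x F)
  then show ?case
    by (simp add: monos_meet_add)
qed (simp_all add: monos_meet_def)

lemma monos_meet_lin: "monos_meet (range V) (lin V a)"
  unfolding lin_def by (rule monos_meet_sum) (auto simp: monos_meet_def pconst_def pvar_def mult_single)

lemma monos_meet_psubst:
  assumes "\<And>m. m \<in> Poly_Mapping.keys P \<Longrightarrow> \<exists>v\<in>Poly_Mapping.keys m. monos_meet A (\<rho> v)"
  shows "monos_meet A (psubst \<rho> P)"
  unfolding psubst_def
proof (intro monos_meet_sum monos_meet_mult_right)
  fix m assume "m \<in> Poly_Mapping.keys P"
  then obtain v where v: "v \<in> Poly_Mapping.keys m" and meet: "monos_meet A (\<rho> v)"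
    using assms by blast
  then have "monom_subst \<rho> m = \<rho> v * (\<rho> v ^ (Poly_Mapping.lookup m v - 1) *
      (\<Prod>w\<in>Poly_Mapping.keys m - {v}. \<rho> w ^ Poly_Mapping.lookup m w))"
    unfolding monom_subst_def
    by (simp add: prod.remove mult.assoc[symmetric] power_eq_if[of _ "Poly_Mapping.lookup m v"] in_keys_iff)
  then show "monos_meet A (monom_subst \<rho> m)"
    using monos_meet_mult_left[OF meet] by simp
qed

lemma FB_iff_monos_meet: "(a, P) \<in> FB \<longleftrightarrow> monos_meet (range Yv) P \<and> monos_meet (range Zv) P"
  by (auto simp: FB_def admissible_mono_def monos_meet_def)

lemma lin_endo_FB:
  assumes "u \<in> FB"
  shows "lin_endo L u \<in> FB"
proof -
  have "monos_meet (range V) (psubst (lin_subst L) (snd u))" if V: "V = Yv \<or> V = Zv" for V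
  proof (rule monos_meet_psubst)
    fix m assume "m \<in> Poly_Mapping.keys (snd u)"
    moreover have "monos_meet (range V) (snd u)"
      using assms V by (cases u) (auto simp: FB_iff_monos_meet)
    ultimately obtain i where "V i \<in> Poly_Mapping.keys m"
      by (auto simp: monos_meet_def)
    moreover have "lin_subst L (V i) = lin V (L i)"
      using V by (auto simp: lin_subst_def)
    ultimately show "\<exists>v\<in>Poly_Mapping.keys m. monos_meet (range V) (lin_subst L v)"
      using monos_meet_lin by metis
  qed
  then show ?thesis
    unfolding lin_endo_def FB_iff_monos_meet by blast
qed

lemma endo_lin_endo: "endo (lin_endo L :: 'k::field bel \<Rightarrow> 'k bel)"
  unfolding endo_def
proof (intro conjI ballI allI)
  fix u v :: "'k bel" and c :: 'k
  show "u \<in> FB \<Longrightarrow> lin_endo L u \<in> FB"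
    by (rule lin_endo_FB)
  show "lin_endo L (badd u v) = badd (lin_endo L u) (lin_endo L v)"
    by (simp add: lin_endo_def badd_def lmap_add psubst_add)
  show "lin_endo L (bsmul c u) = bsmul c (lin_endo L u)"
    by (simp add: lin_endo_def bsmul_def map_mult_eq_pconst_mult psubst_mult
        mult_map_scale_conv_mult lmap_single_0_mult)
  show "lin_endo L (bmul u v) = bmul (lin_endo L u) (lin_endo L v)"
    by (simp add: lin_endo_def bmul_def psubst_mult psubst_add ylin_eq_lin zlin_eq_lin psubst_lin_subst_lin)
qed

section \<open>The polynomial part of an ideal\<close>

definition pol_part :: "'k::field bel set \<Rightarrow> 'k pol set" where
  "pol_part I = {P. (0, P) \<in> I}"

lemma gen_FB: "gen i \<in> FB"
  by (simp add: gen_def FB_def)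

lemma pvar_mult_pol_part:
  assumes I: "bideal I" and P: "P \<in> pol_part I"
  shows "pvar v * P \<in> pol_part I"
proof (cases v)
  case (Yv i)
  have "bmul (gen i) (0, P) \<in> I"
    using I P gen_FB unfolding bideal_def pol_part_def by blast
  then show ?thesis
    using Yv by (simp add: pol_part_def bmul_def gen_def ylin_eq_lin zlin_eq_lin lin_single)
next
  case (Zv i)
  have "bmul (0, P) (gen i) \<in> I"
    using I P gen_FB unfolding bideal_def pol_part_def by blast
  then show ?thesis
    using Zv by (simp add: pol_part_def bmul_def gen_def ylin_eq_lin zlin_eq_lin lin_single mult.commute)
qed

lemma pideal_pol_part:
  assumes I: "bideal I"
  shows "pideal (pol_part I)"
proof -
  have zero: "0 \<in> pol_part I"
    using I by (simp add: bideal_def bzero_def pol_part_def)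
  have add: "P + Q \<in> pol_part I" if "P \<in> pol_part I" "Q \<in> pol_part I" for P Q
    using I that unfolding bideal_def pol_part_def by (force simp: badd_def)
  define M where "M = {q. \<forall>P\<in>pol_part I. q * P \<in> pol_part I}"
  have "pconst c \<in> M" for c
  proof -
    have "bsmul c (0, P) \<in> I" if "P \<in> pol_part I" for P
      using I that unfolding bideal_def pol_part_def by blast
    then show ?thesis
      by (simp add: M_def pol_part_def bsmul_def map_mult_eq_pconst_mult mult_map_scale_conv_mult)
  qed
  moreover have "pvar v \<in> M" for v
    using pvar_mult_pol_part[OF I] by (simp add: M_def)
  moreover have "p + q \<in> M" if "p \<in> M" "q \<in> M" for p q
    using that add by (simp add: M_def distrib_right)
  moreover have "p * q \<in> M" if "p \<in> M" "q \<in> M" for p q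
    using that by (simp add: M_def mult.assoc)
  ultimately have "q \<in> M" for q
    by (rule pol_in_subalgebra)
  with zero add show ?thesis
    by (simp add: pideal_def M_def)
qed

lemma bideal_lin_part:
  assumes I: "bideal I" and aP: "(a, P) \<in> I" and P: "P \<in> pol_part I"
  shows "(a, 0) \<in> I"
proof -
  have "badd (a, P) (bsmul (- 1) (0, P)) \<in> I"
    using I aP P unfolding bideal_def pol_part_def by blast
  moreover have "bsmul (- 1) (0, P) = (0, - P)"
    by (simp add: bsmul_def map_eq_zero_iff map_mult_eq_pconst_mult pconst_uminus)
  ultimately show ?thesis
    by (simp add: badd_def)
qed

lemma T_ideal_lin_endo: "T_ideal I \<Longrightarrow> u \<in> I \<Longrightarrow> lin_endo L u \<in> I"
  using endo_lin_endo unfolding T_ideal_def by blast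

lemma pol_part_psubst_lin_subst:
  "T_ideal I \<Longrightarrow> P \<in> pol_part I \<Longrightarrow> psubst (lin_subst L) P \<in> pol_part I"
  using T_ideal_lin_endo[of I "(0, P)" L] by (simp add: pol_part_def lin_endo_def)

section \<open>Homogeneous components\<close>

definition homog_part :: "nat \<Rightarrow> 'k::comm_ring_1 pol \<Rightarrow> 'k pol" where
  "homog_part d P = (\<Sum>m\<in>Poly_Mapping.keys P.
     if mdeg m = d then Poly_Mapping.single m (Poly_Mapping.lookup P m) else 0)"

lemma lookup_homog_part:
  "Poly_Mapping.lookup (homog_part d P) m = (if mdeg m = d then Poly_Mapping.lookup P m else 0)"
proof -
  have "Poly_Mapping.lookup (homog_part d P) m = (\<Sum>k\<in>Poly_Mapping.keys P.
      if k = m \<and> mdeg m = d then Poly_Mapping.lookup P m else 0)"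
    unfolding homog_part_def lookup_sum by (intro sum.cong refl) (auto simp: lookup_single when_def)
  then show ?thesis
    by (simp add: sum.delta in_keys_iff)
qed

lemma homogeneous_homog_part: "homogeneous d (homog_part d P)"
  by (auto simp: homogeneous_def in_keys_iff lookup_homog_part split: if_splits)

lemma sum_homog_part:
  assumes "\<And>m. m \<in> Poly_Mapping.keys P \<Longrightarrow> mdeg m < n"
  shows "(\<Sum>d<n. homog_part d P) = P"
  by (rule poly_mapping_eqI)
    (use assms in \<open>auto simp: lookup_sum lookup_homog_part in_keys_iff\<close>)

lemma mdeg_ge_2_if_admissible:
  assumes "admissible_mono m"
  shows "2 \<le> mdeg m"
proof -
  obtain i j where i: "Yv i \<in> Poly_Mapping.keys m" and j: "Zv j \<in> Poly_Mapping.keys m"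
    using assms by (auto simp: admissible_mono_def)
  have "Poly_Mapping.lookup m (Yv i) + Poly_Mapping.lookup m (Zv j) = (\<Sum>v\<in>{Yv i, Zv j}. Poly_Mapping.lookup m v)"
    by simp
  also have "\<dots> \<le> mdeg m"
    unfolding mdeg_def using i j by (intro sum_mono2) auto
  finally have "Poly_Mapping.lookup m (Yv i) + Poly_Mapping.lookup m (Zv j) \<le> mdeg m" .
  with i j show ?thesis
    by (simp add: in_keys_iff)
qed

lemma lin_endo_scale:
  "lin_endo (\<lambda>i. Poly_Mapping.single i t) (a, P) =
     (Poly_Mapping.single 0 t * a, psubst (\<lambda>v. pconst t * pvar v) P)"
proof -
  have "lin_subst (\<lambda>i. Poly_Mapping.single i t) = (\<lambda>v. pconst t * pvar v)"
    by (rule ext) (simp add: lin_subst_def lin_single split: var.split)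
  moreover have "lmap (\<lambda>i. Poly_Mapping.single i t) a = Poly_Mapping.single 0 t * a"
  proof -
    have "lmap (\<lambda>i. Poly_Mapping.single i t) a =
        Poly_Mapping.single 0 t * (\<Sum>i\<in>Poly_Mapping.keys a. Poly_Mapping.single i (Poly_Mapping.lookup a i))"
      by (simp add: lmap_def sum_distrib_left mult_single mult.commute)
    then show ?thesis
      by (simp only: poly_mapping_eq_sum_single[symmetric])
  qed
  ultimately show ?thesis
    by (simp add: lin_endo_def)
qed

lemma psubst_scale:
  assumes "\<And>m. m \<in> Poly_Mapping.keys P \<Longrightarrow> mdeg m < n"
  shows "psubst (\<lambda>v. pconst t * pvar v) P = (\<Sum>d<n. pconst t ^ d * homog_part d P)"
proof -
  have "psubst (\<lambda>v. pconst t * pvar v) P = psubst (\<lambda>v. pconst t * pvar v) (\<Sum>d<n. homog_part d P)"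
    by (simp only: sum_homog_part[OF assms])
  then show ?thesis
    by (simp add: psubst_sum psubst_homogeneous[OF homogeneous_homog_part])
qed

text \<open>Apply the endomorphism x_i \<mapsto> t x_i to (a, P) and subtract t (a, P): the linear parts cancel,
  and the polynomial part is a polynomial in t whose coefficient of t^d is the expression below.\<close>

lemma T_ideal_homog_part_minus:
  fixes a :: "nat \<Rightarrow>\<^sub>0 'k::field"
  assumes K: "infinite (UNIV :: 'k set)" and I: "T_ideal I" and aP: "(a, P) \<in> I"
  shows "homog_part d P - (if d = 1 then P else 0) \<in> pol_part I"
proof -
  have B: "bideal I" and J: "pideal (pol_part I)"
    using I pideal_pol_part by (auto simp: T_ideal_def)
  obtain n where n: "\<And>m. m \<in> Poly_Mapping.keys P \<Longrightarrow> mdeg m < n" and "1 < n" and "d < n"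
    using finite_nat_set_iff_bounded[of "insert 1 (insert d (mdeg ` Poly_Mapping.keys P))"] by auto
  define X where "X d = homog_part d P - (if d = 1 then P else 0)" for d
  have "X d \<in> pol_part I"
  proof (rule power_sum_coeff_in_subspace[OF K pideal_0[OF J] pideal_add[OF J] _ _ \<open>d < n\<close>])
    show "pconst c * x \<in> pol_part I" if "x \<in> pol_part I" for x c
      using J that by (rule pideal_mult)
  next
    fix t :: 'k
    let ?L = "\<lambda>i. Poly_Mapping.single i t"
    have "(\<Sum>d<n. pconst t ^ d * (if d = 1 then P else 0)) = (\<Sum>d<n. if d = 1 then pconst t * P else 0)"
      by (rule sum.cong) auto
    with \<open>1 < n\<close> have sum_X: "(\<Sum>d<n. pconst t ^ d * X d) = psubst (\<lambda>v. pconst t * pvar v) P - pconst t * P"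
      by (simp add: psubst_scale[OF n] X_def right_diff_distrib sum_subtractf)
    have "badd (lin_endo ?L (a, P)) (bsmul (- t) (a, P)) \<in> I"
      using B aP T_ideal_lin_endo[OF I aP] by (simp add: bideal_def)
    also have "badd (lin_endo ?L (a, P)) (bsmul (- t) (a, P)) = (0, \<Sum>d<n. pconst t ^ d * X d)"
      unfolding sum_X
      by (simp add: lin_endo_scale badd_def bsmul_def map_mult_eq_pconst_mult mult_map_scale_conv_mult
          pconst_uminus distrib_right[symmetric] single_add[symmetric])
    finally show "(\<Sum>d<n. pconst t ^ d * X d) \<in> pol_part I"
      by (simp add: pol_part_def)
  qed
  then show ?thesis
    by (simp add: X_def)
qed

lemma T_ideal_homog_part:
  fixes a :: "nat \<Rightarrow>\<^sub>0 'k::field"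
  assumes K: "infinite (UNIV :: 'k set)" and I: "T_ideal I" and aP: "(a, P) \<in> I"
  shows "P \<in> pol_part I" and "homog_part d P \<in> pol_part I"
proof -
  have "admissible_mono m" if "m \<in> Poly_Mapping.keys P" for m
    using I aP that by (auto simp: T_ideal_def bideal_def FB_def)
  then have no_linear: "homog_part 1 P = 0"
    by (intro poly_mapping_eqI) (use mdeg_ge_2_if_admissible in \<open>fastforce simp: lookup_homog_part in_keys_iff\<close>)
  have "pconst (- 1) * (homog_part 1 P - P) \<in> pol_part I"
    using I T_ideal_homog_part_minus[OF K I aP, of 1]
    by (simp add: T_ideal_def pideal_pol_part pideal_mult)
  then show "P \<in> pol_part I"
    using no_linear by (simp add: pconst_uminus)
  show "homog_part d P \<in> pol_part I"
    using T_ideal_homog_part_minus[OF K I aP, of d] no_linear I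
    by (cases "d = 1") (simp_all add: T_ideal_def pideal_pol_part pideal_0)
qed

section \<open>The polynomial y_1 z_2 - y_2 z_1\<close>

definition det_yz :: "'k::comm_ring_1 pol" where
  "det_yz = pvar (Yv 0) * pvar (Zv 1) - pvar (Yv 1) * pvar (Zv 0)"

lemma gen_in_T_ideal:
  assumes I: "T_ideal I" and a: "(a, 0) \<in> I" and "a \<noteq> (0 :: nat \<Rightarrow>\<^sub>0 'k::field)"
  shows "gen j \<in> I"
proof -
  obtain i where i: "i \<in> Poly_Mapping.keys a"
    using \<open>a \<noteq> 0\<close> keys_eq_empty by blast
  define L where "L k = (if k = i then Poly_Mapping.single j (1 / Poly_Mapping.lookup a i) else 0)" for k
  have "lmap L a = (\<Sum>k\<in>Poly_Mapping.keys a. if k = i then Poly_Mapping.single j 1 else 0)"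
    unfolding lmap_def by (intro sum.cong refl) (auto simp: L_def mult_single in_keys_iff)
  also have "\<dots> = Poly_Mapping.single j 1"
    using i by simp
  finally have "lin_endo L (a, 0) = gen j"
    by (simp add: lin_endo_def gen_def)
  then show ?thesis
    using T_ideal_lin_endo[OF I a, of L] by simp
qed

lemma det_yz_in_pol_part:
  assumes I: "bideal I" and "gen 0 \<in> I" and "(gen 1 :: 'k::field bel) \<in> I"
  shows "det_yz \<in> pol_part I"
proof -
  have "bmul (gen i) (gen j) \<in> I" if "i \<in> {0, 1}" for i j :: nat
    using I assms(2,3) that gen_FB unfolding bideal_def by blast
  then have "pvar (Yv 0) * pvar (Zv 1) \<in> pol_part I" and "pvar (Yv 1) * pvar (Zv 0) \<in> pol_part I"
    by (auto simp: pol_part_def bmul_def gen_def ylin_eq_lin zlin_eq_lin lin_single)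
  then have "pvar (Yv 0) * pvar (Zv 1) + pconst (- 1) * (pvar (Yv 1) * pvar (Zv 0)) \<in> pol_part I"
    using pideal_pol_part[OF I] by (simp add: pideal_add pideal_mult)
  then show ?thesis
    by (simp add: det_yz_def pconst_uminus)
qed

lemma w_elem_in_bideal:
  assumes I: "bideal I" and "det_yz ^ d \<in> pol_part I" and "d \<le> mu2"
  shows "(w_elem j mu1 mu2 :: 'k::field bel) \<in> I"
proof -
  have "pvar (Yv 0) ^ j * det_yz ^ (mu2 - d) * pvar (Zv 0) ^ (mu1 - mu2 - j) * det_yz ^ d \<in> pol_part I"
    using pideal_pol_part[OF I] assms(2) by (rule pideal_mult)
  moreover have "det_yz ^ mu2 = det_yz ^ (mu2 - d) * (det_yz :: 'k pol) ^ d"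
    using \<open>d \<le> mu2\<close> by (simp add: power_add[symmetric])
  ultimately show ?thesis
    by (simp add: w_elem_def pol_part_def det_yz_def ac_simps)
qed

section \<open>Substituting linear combinations of two variables\<close>

fun var_index :: "var \<Rightarrow> nat" where
  "var_index (Yv i) = i"
| "var_index (Zv i) = i"

definition lin2_subst :: "(nat \<Rightarrow> 'k::comm_ring_1 pol) \<Rightarrow> (nat \<Rightarrow> 'k pol) \<Rightarrow> var \<Rightarrow> 'k pol" where
  "lin2_subst \<alpha> \<beta> v = (case v of
     Yv i \<Rightarrow> \<alpha> i * pvar (Yv 0) + \<beta> i * pvar (Yv 1)
   | Zv i \<Rightarrow> \<alpha> i * pvar (Zv 0) + \<beta> i * pvar (Zv 1))"

lemma lin2_subst_pconst:
  "lin2_subst (\<lambda>i. pconst (a i)) (\<lambda>i. pconst (b i)) =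
     lin_subst (\<lambda>i. Poly_Mapping.single 0 (a i) + Poly_Mapping.single 1 (b i))"
  by (rule ext) (simp add: lin2_subst_def lin_subst_def lin_add lin_single split: var.split)

lemma lin2_subst_det_yz:
  "lin2_subst (\<lambda>i. pconst (c (Yv i)) * pvar (Zv 1) - pconst (c (Zv i)) * pvar (Yv 1))
              (\<lambda>i. pconst (c (Zv i)) * pvar (Yv 0) - pconst (c (Yv i)) * pvar (Zv 0))
   = (\<lambda>v. det_yz * pconst (c v))"
  by (rule ext) (simp add: lin2_subst_def det_yz_def algebra_simps split: var.split)

text \<open>For scalar coefficients this is an endomorphism. In general, substitute for \<alpha> i and
  \<beta> i fresh variables y_{N+i} and z_{N+i} and specialise those (psubst_in_pideal).\<close>

lemma pol_part_psubst_lin2_subst: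
  fixes I :: "'k::field bel set"
  assumes K: "infinite (UNIV :: 'k set)" and I: "T_ideal I" and P: "P \<in> pol_part I"
  shows "psubst (lin2_subst \<alpha> \<beta>) P \<in> pol_part I"
proof -
  obtain N where "\<forall>n \<in> insert 2 (var_index ` pvars P). n < N"
    using finite_nat_set_iff_bounded finite_pvars by (meson finite_imageI finite_insert)
  then have "2 \<le> N" and N: "\<And>v. v \<in> pvars P \<Longrightarrow> var_index v < N"
    by auto
  define F where "F = Yv ` {N..<2 * N} \<union> Zv ` {N..<2 * N}"
  define fresh :: "var \<Rightarrow> 'k pol" where "fresh = lin2_subst (\<lambda>i. pvar (Yv (N + i))) (\<lambda>i. pvar (Zv (N + i)))"
  have fresh_in_F: "Yv (N + i) \<in> F" "Zv (N + i) \<in> F" if "i < N" for i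
    using that by (auto simp: F_def)
  have fixed_notin_F: "Yv 0 \<notin> F" "Yv 1 \<notin> F" "Zv 0 \<notin> F" "Zv 1 \<notin> F"
    using \<open>2 \<le> N\<close> by (auto simp: F_def)
  have specialise: "psubst (\<lambda>v. if v \<in> F then g v else pvar v) (psubst fresh P) =
      psubst (lin2_subst (\<lambda>i. g (Yv (N + i))) (\<lambda>i. g (Zv (N + i)))) P" for g
    unfolding psubst_psubst
  proof (rule psubst_cong)
    fix v assume "v \<in> pvars P"
    then have "var_index v < N"
      by (rule N)
    then show "psubst (\<lambda>v. if v \<in> F then g v else pvar v) (fresh v) =
        lin2_subst (\<lambda>i. g (Yv (N + i))) (\<lambda>i. g (Zv (N + i))) v"
      using fresh_in_F fixed_notin_F
      by (cases v) (auto simp: fresh_def lin2_subst_def psubst_add psubst_mult)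
  qed
  have "psubst (\<lambda>v. if v \<in> F then pconst (c v) else pvar v) (psubst fresh P) \<in> pol_part I" for c
    unfolding specialise lin2_subst_pconst by (rule pol_part_psubst_lin_subst[OF I P])
  moreover have "pideal (pol_part I)"
    using I by (simp add: T_ideal_def pideal_pol_part)
  moreover have "finite F"
    by (simp add: F_def)
  ultimately have "psubst (\<lambda>v. if v \<in> F then (case v of Yv j \<Rightarrow> \<alpha> (j - N) | Zv j \<Rightarrow> \<beta> (j - N)) else pvar v)
      (psubst fresh P) \<in> pol_part I"
    using psubst_in_pideal[OF K] by blast
  then show ?thesis
    unfolding specialise by simp
qed

lemma det_yz_power_in_pol_part:
  assumes K: "infinite (UNIV :: 'k::field set)" and I: "T_ideal I"
    and P: "P \<in> pol_part I" "P \<noteq> 0" "homogeneous d P"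
  shows "(det_yz :: 'k pol) ^ d \<in> pol_part I"
proof -
  obtain c where c: "peval c P \<noteq> 0"
    using ex_peval_nonzero[OF K P(2)] by blast
  have J: "pideal (pol_part I)"
    using I by (simp add: T_ideal_def pideal_pol_part)
  have "psubst (\<lambda>v. det_yz * pconst (c v)) P \<in> pol_part I"
    unfolding lin2_subst_det_yz[symmetric] by (rule pol_part_psubst_lin2_subst[OF K I P(1)])
  then have "det_yz ^ d * pconst (peval c P) \<in> pol_part I"
    by (simp add: psubst_homogeneous[OF P(3)] psubst_pconst_eq_peval)
  then have "pconst (1 / peval c P) * (det_yz ^ d * pconst (peval c P)) \<in> pol_part I"
    by (rule pideal_mult[OF J])
  then show ?thesis
    using c by (simp add: mult.left_commute pconst_mult[symmetric])
qed

lemma T_ideal_det_yz_power: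
  fixes f :: "'k::field bel"
  assumes K: "infinite (UNIV :: 'k set)" and I: "T_ideal I" and "f \<in> I" and "f \<noteq> bzero"
  shows "\<exists>d \<le> bdeg f. det_yz ^ d \<in> pol_part I"
proof -
  obtain a P where f: "f = (a, P)"
    by fastforce
  have P: "P \<in> pol_part I" and parts: "\<And>d. homog_part d P \<in> pol_part I"
    using T_ideal_homog_part[OF K I] \<open>f \<in> I\<close> unfolding f by blast+
  show ?thesis
  proof (cases "a = 0")
    case False
    have "(a, 0) \<in> I"
      by (rule bideal_lin_part[of I a P]) (use I \<open>f \<in> I\<close> P in \<open>simp_all add: T_ideal_def f\<close>)
    then have "gen 0 \<in> I" and "gen 1 \<in> I"
      using gen_in_T_ideal[OF I _ False] by blast+
    then have "det_yz \<in> pol_part I"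
      using I by (intro det_yz_in_pol_part) (auto simp: T_ideal_def)
    moreover have "1 \<le> bdeg f"
      using False by (simp add: bdeg_def f)
    ultimately show ?thesis
      by (metis power_one_right)
  next
    case True
    with \<open>f \<noteq> bzero\<close> obtain m where m: "m \<in> Poly_Mapping.keys P"
      using keys_eq_empty by (fastforce simp: f bzero_def)
    then have "homog_part (mdeg m) P \<noteq> 0"
      by (metis in_keys_iff lookup_homog_part lookup_zero)
    then have "det_yz ^ mdeg m \<in> pol_part I"
      using det_yz_power_in_pol_part[OF K I parts _ homogeneous_homog_part] by blast
    moreover have "mdeg m \<le> bdeg f"
      using m True by (simp add: bdeg_def f)
    ultimately show ?thesis
      by blast
  qed
qed

theorem corollary4p3:
  fixes f :: "('k::field_char_0) bel"
    and k mu1 mu2 j :: nat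
  assumes "f \<in> FB" and "f \<noteq> bzero" and "bdeg f = k"
    and "0 < mu2" and "mu2 \<le> mu1" and "k \<le> mu2" and "j \<le> mu1 - mu2"
  shows "(w_elem j mu1 mu2 :: 'k bel) \<in> T_ideal_gen f"
  unfolding T_ideal_gen_def
proof
  fix I assume "I \<in> {I. T_ideal I \<and> f \<in> I}"
  then have I: "T_ideal I" and "f \<in> I"
    by auto
  then obtain d where "d \<le> k" and "det_yz ^ d \<in> pol_part I"
    using T_ideal_det_yz_power[OF infinite_UNIV_char_0] assms(2,3) by blast
  with I \<open>k \<le> mu2\<close> show "w_elem j mu1 mu2 \<in> I"
    using w_elem_in_bideal[of I d] by (simp add: T_ideal_def)
qed

end
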